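(* Let $d,n\in\mathbb{N}$, $R>1$, $\epsilon\ge0$, and let $K_r(x,y)$ be a polynomial in $(x,y)$ whose operator $\mathcal K_rf(x)=\int_{-R}^RK_r(x,y)f(y)\,dy$ satisfies $\|\mathcal K_rT_k-T_k\|_{1,\mathrm{cheb}}\le\epsilon$ for all $0\le k\le d$. Let $K_{r,n}(x,y)=\prod_{i=1}^nK_r(x_i,y_i)$ and $\mathcal K_{r,n}f(x)=\int_{[-R,R]^n}K_{r,n}(x,y)f(y)\,dy$. Then for every $\alpha\in\mathbb{N}_0^n$ with $\alpha_i\le d$ for all $i$, \[ \|\mathcal K_{r,n}T_\alpha-T_\alpha\|_{1,\mathrm{cheb}}\le\epsilon\sum_{i=0}^{n-1}(1+\epsilon)^i. \] Moreover, if $\epsilon\le1/n$, then $\|\mathcal K_{r,n}T_\alpha-T_\alpha\|_{1,\mathrm{cheb}}\le e\,\epsilon\, n$.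
   Context: $T_k(x)=\cos(k\arccos x)$ is the Chebyshev polynomial of the first kind; for $\alpha\in\mathbb{N}_0^n$, $T_\alpha(x)=\prod_iT_{\alpha_i}(x_i)$; for a polynomial $p=\sum_\alpha p_\alpha T_\alpha$, $\|p\|_{1,\mathrm{cheb}}=\sum_\alpha|p_\alpha|$. $e$ is Euler's number. *)

theory Defs
  imports "HOL-Analysis.Analysis"
begin

text \<open>Chebyshev polynomials of the first kind, as polynomial functions on all of the reals
  (so that T k x = cos (k * arccos x) for x in [-1,1]).\<close>
fun cheb_T :: "nat \<Rightarrow> real \<Rightarrow> real" where
  "cheb_T 0 x = 1"
| "cheb_T (Suc 0) x = x"
| "cheb_T (Suc (Suc k)) x = 2 * x * cheb_T (Suc k) x - cheb_T k x"

definition cheb_Tn :: "nat ^ 'n \<Rightarrow> real ^ 'n \<Rightarrow> real" where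
  "cheb_Tn \<alpha> x = (\<Prod>i\<in>UNIV. cheb_T (\<alpha> $ i) (x $ i))"

definition cheb_rep1 :: "(real \<Rightarrow> real) \<Rightarrow> (nat \<Rightarrow> real) \<Rightarrow> bool" where
  "cheb_rep1 f p \<longleftrightarrow> finite {k. p k \<noteq> 0} \<and>
     (\<forall>x. f x = (\<Sum>k\<in>{k. p k \<noteq> 0}. p k * cheb_T k x))"

definition cheb_norm1_1 :: "(real \<Rightarrow> real) \<Rightarrow> real" where
  "cheb_norm1_1 f = (let p = (THE p. cheb_rep1 f p) in (\<Sum>k\<in>{k. p k \<noteq> 0}. \<bar>p k\<bar>))"

definition cheb_rep :: "(real ^ 'n \<Rightarrow> real) \<Rightarrow> (nat ^ 'n \<Rightarrow> real) \<Rightarrow> bool" where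
  "cheb_rep f p \<longleftrightarrow> finite {\<alpha>. p \<alpha> \<noteq> 0} \<and>
     (\<forall>x. f x = (\<Sum>\<alpha>\<in>{\<alpha>. p \<alpha> \<noteq> 0}. p \<alpha> * cheb_Tn \<alpha> x))"

definition cheb_norm1 :: "(real ^ 'n \<Rightarrow> real) \<Rightarrow> real" where
  "cheb_norm1 f = (let p = (THE p. cheb_rep f p) in (\<Sum>\<alpha>\<in>{\<alpha>. p \<alpha> \<noteq> 0}. \<bar>p \<alpha>\<bar>))"

definition is_bivariate_poly :: "(real \<Rightarrow> real \<Rightarrow> real) \<Rightarrow> bool" where
  "is_bivariate_poly K \<longleftrightarrow> (\<exists>N c. \<forall>x y. K x y = (\<Sum>i\<le>N. \<Sum>j\<le>N. c i j * x ^ i * y ^ j))"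

definition kop1 :: "real \<Rightarrow> (real \<Rightarrow> real \<Rightarrow> real) \<Rightarrow> (real \<Rightarrow> real) \<Rightarrow> real \<Rightarrow> real" where
  "kop1 R K f x = integral {-R..R} (\<lambda>y. K x y * f y)"

definition kopn :: "real \<Rightarrow> (real \<Rightarrow> real \<Rightarrow> real) \<Rightarrow> (real ^ 'n \<Rightarrow> real) \<Rightarrow> real ^ 'n \<Rightarrow> real" where
  "kopn R K f x = integral (cbox (\<chi> i. -R) (\<chi> i. R))
      (\<lambda>y. (\<Prod>i\<in>UNIV. K (x $ i) (y $ i)) * f y)"

end

theory Submission
  imports Defs "HOL-Computational_Algebra.Polynomial"
begin

text \<open>By Fubini, the tensor kernel acts on T_alpha coordinatewise, so K_{r,n} T_alpha is the
  product over i of K_r T_{alpha_i} = T_{alpha_i} + E_{alpha_i} with cheb_norm1_1 E_k <= eps.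
  Since products of Chebyshev polynomials are linearly independent, the norm of an expansion is the
  l1 norm of its coefficients; expanding the product and telescoping one factor at a time gives
  the bound (1 + eps)^n - 1 = eps * sum_{i<n} (1 + eps)^i. When n * eps <= 1, each
  (1 + eps)^i <= exp (i * eps) <= e.\<close>

fun cheb_poly :: "nat \<Rightarrow> real poly" where
  "cheb_poly 0 = 1"
| "cheb_poly (Suc 0) = [:0, 1:]"
| "cheb_poly (Suc (Suc k)) = [:0, 2:] * cheb_poly (Suc k) - cheb_poly k"

lemma poly_cheb_poly [simp]: "poly (cheb_poly k) = cheb_T k"
proof
  show "poly (cheb_poly k) x = cheb_T k x" for x
    by (induction k rule: cheb_poly.induct) auto
qed

lemma cheb_poly_degree_coeff:
  "degree (cheb_poly k) \<le> k \<and> coeff (cheb_poly k) k = (if k = 0 then 1 else 2 ^ (k - 1))"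
proof (induction k rule: cheb_poly.induct)
  case (3 k)
  have "degree ([:0, 2:] * cheb_poly (Suc k)) \<le> Suc (Suc k)"
    using 3 degree_mult_le[of "[:0, 2:]" "cheb_poly (Suc k)"] by simp
  moreover have "degree (cheb_poly k) \<le> Suc (Suc k)"
    using 3 by simp
  moreover have "coeff (cheb_poly k) (Suc (Suc k)) = 0"
    using 3 by (simp add: coeff_eq_0)
  ultimately show ?case
    using 3 by (auto intro: degree_diff_le)
qed simp_all

lemma degree_cheb_poly [simp]: "degree (cheb_poly k) = k"
proof (rule antisym)
  show "k \<le> degree (cheb_poly k)"
    using cheb_poly_degree_coeff[of k] by (intro le_degree) simp
qed (use cheb_poly_degree_coeff[of k] in simp)

lemma lead_coeff_cheb_poly_nonzero: "lead_coeff (cheb_poly k) \<noteq> 0"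
  using cheb_poly_degree_coeff[of k] by simp

lemma cheb_poly_combination_eq_0_imp:
  assumes "finite F" "(\<Sum>k\<in>F. smult (c k) (cheb_poly k)) = 0"
  shows "\<forall>k\<in>F. c k = 0"
  using assms
proof (induction F rule: finite_linorder_max_induct)
  case (insert m F)
  have "m \<notin> F"
    using insert.hyps(2) by blast
  have "coeff (cheb_poly k) m = 0" if "k \<in> F" for k
    using insert.hyps(2) that by (intro coeff_eq_0) simp
  then have "coeff (\<Sum>k\<in>insert m F. smult (c k) (cheb_poly k)) m = c m * lead_coeff (cheb_poly m)"
    using \<open>m \<notin> F\<close> insert.hyps(1) by (simp add: coeff_sum)
  then have "c m = 0"
    using insert.prems lead_coeff_cheb_poly_nonzero[of m] by simp
  with insert \<open>m \<notin> F\<close> show ?case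
    by simp
qed simp

definition linearly_independent_funs :: "('k \<Rightarrow> 'a \<Rightarrow> real) \<Rightarrow> bool" where
  "linearly_independent_funs \<phi> \<longleftrightarrow>
     (\<forall>F c. finite F \<longrightarrow> (\<forall>x. (\<Sum>k\<in>F. c k * \<phi> k x) = 0) \<longrightarrow> (\<forall>k\<in>F. c k = 0))"

lemma linearly_independent_funsD:
  assumes "linearly_independent_funs \<phi>" "finite F" "\<And>x. (\<Sum>k\<in>F. c k * \<phi> k x) = 0" "k \<in> F"
  shows "c k = 0"
  using assms unfolding linearly_independent_funs_def by blast

lemma linearly_independent_cheb_T: "linearly_independent_funs cheb_T"
  unfolding linearly_independent_funs_def
proof (intro allI impI)
  fix F and c :: "nat \<Rightarrow> real"
  assume "finite F" and "\<forall>x. (\<Sum>k\<in>F. c k * cheb_T k x) = 0"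
  then have "poly (\<Sum>k\<in>F. smult (c k) (cheb_poly k)) = poly 0"
    by (simp add: fun_eq_iff poly_sum)
  with \<open>finite F\<close> show "\<forall>k\<in>F. c k = 0"
    by (intro cheb_poly_combination_eq_0_imp) (simp_all add: poly_eq_poly_eq_iff)
qed

lemma sum_abs_the_coefficients:
  assumes indep: "linearly_independent_funs \<phi>" and "finite B"
    and f: "\<And>x. f x = (\<Sum>k\<in>B. c k * \<phi> k x)"
  shows "(let p = THE p. finite {k. p k \<noteq> 0} \<and> (\<forall>x. f x = (\<Sum>k\<in>{k. p k \<noteq> 0}. p k * \<phi> k x))
          in \<Sum>k\<in>{k. p k \<noteq> 0}. \<bar>p k\<bar>) = (\<Sum>k\<in>B. \<bar>c k\<bar>)"
proof -
  define p where "p k = (if k \<in> B then c k else 0)" for k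
  have supp_p: "{k. p k \<noteq> 0} \<subseteq> B"
    by (auto simp: p_def)
  have p_rep: "finite {k. p k \<noteq> 0} \<and> (\<forall>x. f x = (\<Sum>k\<in>{k. p k \<noteq> 0}. p k * \<phi> k x))"
    using supp_p \<open>finite B\<close> unfolding f
    by (auto intro: finite_subset sum.mono_neutral_cong_right simp: p_def)
  have p_unique: "q = p"
    if "finite {k. q k \<noteq> 0} \<and> (\<forall>x. f x = (\<Sum>k\<in>{k. q k \<noteq> 0}. q k * \<phi> k x))" for q
  proof
    fix k
    define F where "F = B \<union> {k. q k \<noteq> 0}"
    have "finite F"
      using \<open>finite B\<close> that by (simp add: F_def)
    have combination_eq_0: "(\<Sum>k\<in>F. (q k - p k) * \<phi> k x) = 0" for x
    proof -
      have "(\<Sum>k\<in>F. q k * \<phi> k x) = f x"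
        using that \<open>finite F\<close> by (simp add: F_def sum.mono_neutral_right)
      moreover have "(\<Sum>k\<in>F. p k * \<phi> k x) = f x"
        unfolding f using \<open>finite F\<close> by (intro sum.mono_neutral_cong_right) (auto simp: F_def p_def)
      ultimately show ?thesis
        by (simp add: left_diff_distrib sum_subtractf)
    qed
    show "q k = p k"
    proof (cases "k \<in> F")
      case True
      then show ?thesis
        using linearly_independent_funsD[OF indep \<open>finite F\<close> combination_eq_0] by simp
    qed (simp add: F_def p_def)
  qed
  have "(THE p. finite {k. p k \<noteq> 0} \<and> (\<forall>x. f x = (\<Sum>k\<in>{k. p k \<noteq> 0}. p k * \<phi> k x))) = p"
    using p_rep p_unique by (rule the_equality)
  moreover have "(\<Sum>k\<in>{k. p k \<noteq> 0}. \<bar>p k\<bar>) = (\<Sum>k\<in>B. \<bar>c k\<bar>)"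
    using supp_p \<open>finite B\<close> by (intro sum.mono_neutral_cong_left) (auto simp: p_def)
  ultimately show ?thesis
    by simp
qed

lemma cheb_norm1_1_eq:
  assumes "finite B" "\<And>x. f x = (\<Sum>k\<in>B. c k * cheb_T k x)"
  shows "cheb_norm1_1 f = (\<Sum>k\<in>B. \<bar>c k\<bar>)"
  unfolding cheb_norm1_1_def cheb_rep1_def
  using linearly_independent_cheb_T assms by (rule sum_abs_the_coefficients)

text \<open>Induction over the coordinates in S: freezing all coordinates but j, independence of
  \<phi> in the j-th variable splits the combination according to the value of \<alpha> $ j.\<close>

lemma sum_fibre_eq_0_if_partial_tensor_combination_eq_0:
  fixes \<phi> :: "'k \<Rightarrow> 'a \<Rightarrow> real" and c :: "'k ^ 'n \<Rightarrow> real"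
  assumes indep: "linearly_independent_funs \<phi>" and "finite S" and "finite F"
    and "\<And>x. (\<Sum>\<alpha>\<in>F. c \<alpha> * (\<Prod>i\<in>S. \<phi> (\<alpha> $ i) (x $ i))) = 0"
  shows "(\<Sum>\<alpha>\<in>{\<alpha>\<in>F. \<forall>i\<in>S. \<alpha> $ i = \<gamma> $ i}. c \<alpha>) = 0"
  using \<open>finite S\<close> assms(4)
proof (induction S arbitrary: c rule: finite_induct)
  case (insert j S)
  have slice_eq_0: "(\<Sum>\<alpha>\<in>{\<alpha>\<in>F. \<alpha> $ j = k}. c \<alpha> * (\<Prod>i\<in>S. \<phi> (\<alpha> $ i) (x $ i))) = 0" for k x
  proof -
    define P where "P \<alpha> = c \<alpha> * (\<Prod>i\<in>S. \<phi> (\<alpha> $ i) (x $ i))" for \<alpha>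
    define D where "D = (\<lambda>\<alpha>. \<alpha> $ j) ` F"
    have "finite D"
      using \<open>finite F\<close> by (simp add: D_def)
    have "(\<Sum>k\<in>D. (\<Sum>\<alpha>\<in>{\<alpha>\<in>F. \<alpha> $ j = k}. P \<alpha>) * \<phi> k y) = 0" for y
    proof -
      define x' where "x' = (\<chi> i. if i = j then y else x $ i)"
      have "(\<Prod>i\<in>insert j S. \<phi> (\<alpha> $ i) (x' $ i)) = \<phi> (\<alpha> $ j) y * (\<Prod>i\<in>S. \<phi> (\<alpha> $ i) (x $ i))" for \<alpha>
        using insert.hyps by (auto simp: x'_def intro!: prod.cong)
      then have "0 = (\<Sum>\<alpha>\<in>F. P \<alpha> * \<phi> (\<alpha> $ j) y)"
        using insert.prems[of x'] by (simp add: P_def mult_ac)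
      also have "\<dots> = (\<Sum>k\<in>D. \<Sum>\<alpha>\<in>{\<alpha>\<in>F. \<alpha> $ j = k}. P \<alpha> * \<phi> (\<alpha> $ j) y)"
        unfolding D_def using \<open>finite F\<close> by (rule sum.image_gen)
      also have "\<dots> = (\<Sum>k\<in>D. (\<Sum>\<alpha>\<in>{\<alpha>\<in>F. \<alpha> $ j = k}. P \<alpha>) * \<phi> k y)"
        by (auto simp: sum_distrib_right intro!: sum.cong)
      finally show ?thesis
        by simp
    qed
    note slices = linearly_independent_funsD[OF indep \<open>finite D\<close> this]
    show ?thesis
    proof (cases "k \<in> D")
      case True
      then show ?thesis
        using slices by (simp add: P_def)
    next
      case False
      then have "{\<alpha>\<in>F. \<alpha> $ j = k} = {}"
        by (auto simp: D_def)
      then show ?thesis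
        by (simp only: sum.empty)
    qed
  qed
  have "(\<Sum>\<alpha>\<in>F. (if \<alpha> $ j = \<gamma> $ j then c \<alpha> else 0) * (\<Prod>i\<in>S. \<phi> (\<alpha> $ i) (x $ i))) = 0" for x
    using slice_eq_0[where k = "\<gamma> $ j" and x = x] \<open>finite F\<close>
    by (simp add: if_distrib if_distribR sum.inter_filter cong: if_cong)
  then have "(\<Sum>\<alpha>\<in>{\<alpha>\<in>F. \<forall>i\<in>S. \<alpha> $ i = \<gamma> $ i}. if \<alpha> $ j = \<gamma> $ j then c \<alpha> else 0) = 0"
    by (rule insert.IH)
  moreover have "{\<alpha>\<in>{\<alpha>\<in>F. \<forall>i\<in>S. \<alpha> $ i = \<gamma> $ i}. \<alpha> $ j = \<gamma> $ j} = {\<alpha>\<in>F. \<forall>i\<in>insert j S. \<alpha> $ i = \<gamma> $ i}"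
    by auto
  ultimately show ?case
    using \<open>finite F\<close> by (simp add: sum.inter_filter[symmetric])
qed simp

lemma linearly_independent_funs_tensor:
  fixes \<phi> :: "'k \<Rightarrow> 'a \<Rightarrow> real"
  assumes "linearly_independent_funs \<phi>"
  shows "linearly_independent_funs (\<lambda>(\<alpha> :: 'k ^ 'n) x. \<Prod>i\<in>UNIV. \<phi> (\<alpha> $ i) (x $ i))"
  unfolding linearly_independent_funs_def
proof (intro allI impI ballI)
  fix F c \<gamma>
  assume "finite F" "\<forall>x. (\<Sum>\<alpha>\<in>F. c \<alpha> * (\<Prod>i\<in>UNIV. \<phi> (\<alpha> $ i) (x $ i))) = 0" "\<gamma> \<in> F"
  then have "(\<Sum>\<alpha>\<in>{\<alpha>\<in>F. \<forall>i\<in>UNIV. \<alpha> $ i = \<gamma> $ i}. c \<alpha>) = 0"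
    by (intro sum_fibre_eq_0_if_partial_tensor_combination_eq_0[OF assms]) auto
  moreover have "{\<alpha>\<in>F. \<forall>i\<in>UNIV. \<alpha> $ i = \<gamma> $ i} = {\<gamma>}"
    using \<open>\<gamma> \<in> F\<close> by (auto simp: vec_eq_iff)
  ultimately show "c \<gamma> = 0"
    by simp
qed

lemma linearly_independent_cheb_Tn: "linearly_independent_funs cheb_Tn"
  unfolding cheb_Tn_def[abs_def] by (rule linearly_independent_funs_tensor[OF linearly_independent_cheb_T])

lemma cheb_norm1_eq:
  fixes f :: "real ^ 'n \<Rightarrow> real"
  assumes "finite B" "\<And>x. f x = (\<Sum>\<alpha>\<in>B. c \<alpha> * cheb_Tn \<alpha> x)"
  shows "cheb_norm1 f = (\<Sum>\<alpha>\<in>B. \<bar>c \<alpha>\<bar>)"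
  unfolding cheb_norm1_def cheb_rep_def
  using linearly_independent_cheb_Tn assms by (rule sum_abs_the_coefficients)

lemma continuous_on_cheb_T: "continuous_on S (cheb_T k)"
proof -
  have "continuous_on S (\<lambda>x. poly (cheb_poly k) x)"
    by (intro continuous_intros)
  then show ?thesis
    by simp
qed

lemma poly_cheb_expansion:
  fixes p :: "real poly"
  assumes "degree p \<le> M"
  shows "\<exists>c. \<forall>x. poly p x = (\<Sum>k\<le>M. c k * cheb_T k x)"
  using assms
proof (induction M arbitrary: p)
  case 0
  then obtain a where "p = [:a:]"
    by (auto elim: degree_eq_zeroE)
  then show ?case
    by (intro exI[of _ "\<lambda>_. a"]) simp
next
  case (Suc M)
  define a where "a = coeff p (Suc M) / lead_coeff (cheb_poly (Suc M))"
  define q where "q = p - smult a (cheb_poly (Suc M))"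
  have "coeff q i = 0" if "i > M" for i
  proof (cases "i = Suc M")
    case True
    then show ?thesis
      using lead_coeff_cheb_poly_nonzero[of "Suc M"] by (simp add: q_def a_def)
  next
    case False
    with that Suc.prems show ?thesis
      by (simp add: q_def coeff_eq_0)
  qed
  then obtain c where c: "\<And>x. poly q x = (\<Sum>k\<le>M. c k * cheb_T k x)"
    using Suc.IH[of q] degree_le by blast
  have "poly p x = (\<Sum>k\<le>Suc M. (c(Suc M := a)) k * cheb_T k x)" for x
  proof -
    have "poly p x = poly q x + a * cheb_T (Suc M) x"
      by (simp add: q_def)
    also have "\<dots> = (\<Sum>k\<le>Suc M. (c(Suc M := a)) k * cheb_T k x)"
      unfolding c by (auto intro!: sum.cong)
    finally show ?thesis .
  qed
  then show ?case
    by blast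
qed

lemma kop1_polynomial_degree_le:
  assumes K: "\<And>x y. K x y = (\<Sum>i\<le>N. \<Sum>j\<le>N. c i j * x ^ i * y ^ j)"
    and f: "continuous_on {-R..R} f"
  shows "\<exists>p. degree p \<le> N \<and> (\<forall>x. kop1 R K f x = poly p x)"
proof -
  define m where "m j = integral {-R..R} (\<lambda>y. y ^ j * f y)" for j
  define p where "p = (\<Sum>i\<le>N. monom (\<Sum>j\<le>N. c i j * m j) i)"
  have int: "(\<lambda>y. a * (y ^ j * f y)) integrable_on {-R..R}" for j a
    by (intro integrable_continuous_interval continuous_intros f)
  have "kop1 R K f x = poly p x" for x
  proof -
    have "kop1 R K f x = integral {-R..R} (\<lambda>y. \<Sum>i\<le>N. \<Sum>j\<le>N. (c i j * x ^ i) * (y ^ j * f y))"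
      unfolding kop1_def K by (simp add: sum_distrib_left sum_distrib_right mult_ac)
    also have "\<dots> = (\<Sum>i\<le>N. \<Sum>j\<le>N. (c i j * x ^ i) * m j)"
      by (simp add: integral_sum integrable_sum int m_def)
    also have "\<dots> = poly p x"
      by (simp add: p_def poly_sum poly_monom sum_distrib_left mult_ac)
    finally show ?thesis .
  qed
  moreover have "degree p \<le> N"
    unfolding p_def by (intro degree_sum_le) (auto intro: order.trans[OF degree_monom_le])
  ultimately show ?thesis
    by blast
qed

lemma kop1_polynomial:
  assumes "is_bivariate_poly K"
  obtains N where
    "\<And>f. continuous_on {-R..R} f \<Longrightarrow> \<exists>p. degree p \<le> N \<and> (\<forall>x. kop1 R K f x = poly p x)"
proof -
  obtain N c where K: "\<And>x y. K x y = (\<Sum>i\<le>N. \<Sum>j\<le>N. c i j * x ^ i * y ^ j)"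
    using assms unfolding is_bivariate_poly_def by blast
  show ?thesis
    by (rule that) (rule kop1_polynomial_degree_le[OF K])
qed

lemma kop1_cheb_T_expansion:
  assumes "is_bivariate_poly K"
    and err: "\<And>k. k \<le> d \<Longrightarrow> cheb_norm1_1 (\<lambda>x. kop1 R K (cheb_T k) x - cheb_T k x) \<le> \<epsilon>"
  obtains M C where "d \<le> M"
    and "\<And>k x. k \<le> d \<Longrightarrow> kop1 R K (cheb_T k) x = (\<Sum>j\<le>M. C k j * cheb_T j x)"
    and "\<And>k. k \<le> d \<Longrightarrow> (\<Sum>j\<le>M. \<bar>C k j - of_bool (j = k)\<bar>) \<le> \<epsilon>"
proof -
  obtain N where N: "\<And>f. continuous_on {-R..R} f \<Longrightarrow> \<exists>p. degree p \<le> N \<and> (\<forall>x. kop1 R K f x = poly p x)"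
    using kop1_polynomial[OF assms(1)] by blast
  define M where "M = max N d"
  have "\<exists>E. k \<le> d \<longrightarrow> (\<forall>x. kop1 R K (cheb_T k) x - cheb_T k x = (\<Sum>j\<le>M. E j * cheb_T j x))" for k
  proof (cases "k \<le> d")
    case True
    obtain p where "degree p \<le> N" and p: "\<And>x. kop1 R K (cheb_T k) x = poly p x"
      using N[OF continuous_on_cheb_T] by blast
    then have "degree (p - cheb_poly k) \<le> M"
      using True by (auto simp: M_def intro: degree_diff_le)
    from poly_cheb_expansion[OF this] show ?thesis
      by (simp add: p)
  qed simp
  then obtain E where E: "\<And>k x. k \<le> d \<Longrightarrow> kop1 R K (cheb_T k) x - cheb_T k x = (\<Sum>j\<le>M. E k j * cheb_T j x)"
    by metis
  show ?thesis
  proof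
    show "d \<le> M"
      by (simp add: M_def)
    fix k assume "k \<le> d"
    then show "kop1 R K (cheb_T k) x = (\<Sum>j\<le>M. (E k j + of_bool (j = k)) * cheb_T j x)" for x
      using E[of k x] by (simp add: M_def distrib_right sum.distrib)
    show "(\<Sum>j\<le>M. \<bar>E k j + of_bool (j = k) - of_bool (j = k)\<bar>) \<le> \<epsilon>"
      using err[OF \<open>k \<le> d\<close>] cheb_norm1_1_eq[OF _ E[OF \<open>k \<le> d\<close>]] by simp
  qed
qed

lemma integral_lborel_prod_Basis:
  fixes f :: "'a::euclidean_space \<Rightarrow> real \<Rightarrow> real"
  assumes int: "\<And>b. b \<in> Basis \<Longrightarrow> integrable lborel (f b)"
  shows "(\<integral>x. (\<Prod>b\<in>Basis. f b (x \<bullet> b)) \<partial>(lborel::'a measure)) = (\<Prod>b\<in>Basis. (\<integral>t. f b t \<partial>lborel))"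
proof -
  interpret product_sigma_finite "\<lambda>_::'a. (lborel::real measure)"
    by standard
  have [measurable]: "f b \<in> borel_measurable borel" if "b \<in> Basis" for b
    using borel_measurable_integrable[OF int[OF that]] by simp
  have "(\<integral>x. (\<Prod>b\<in>Basis. f b (x \<bullet> b)) \<partial>(lborel::'a measure))
     = (\<integral>y. (\<Prod>b\<in>Basis. f b ((\<Sum>b'\<in>Basis. y b' *\<^sub>R b') \<bullet> b)) \<partial>(\<Pi>\<^sub>M b\<in>Basis. lborel))"
    by (subst lborel_eq) (rule integral_distr; measurable)
  also have "\<dots> = (\<integral>y. (\<Prod>b\<in>Basis. f b (y b)) \<partial>(\<Pi>\<^sub>M b\<in>Basis. lborel))"
    by (intro Bochner_Integration.integral_cong refl prod.cong)
       (simp add: inner_sum_left inner_Basis if_distrib sum.delta cong: if_cong)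
  also have "\<dots> = (\<Prod>b\<in>Basis. (\<integral>t. f b t \<partial>lborel))"
    by (rule product_integral_prod) (auto intro: int)
  finally show ?thesis .
qed

lemma integral_lborel_prod_vec:
  fixes f :: "'n::finite \<Rightarrow> real \<Rightarrow> real"
  assumes int: "\<And>i. integrable lborel (f i)"
  shows "(\<integral>x. (\<Prod>i\<in>UNIV. f i (x $ i)) \<partial>(lborel::(real ^ 'n) measure)) = (\<Prod>i\<in>UNIV. (\<integral>t. f i t \<partial>lborel))"
proof -
  define F where "F b = f (SOME i. b = axis i 1)" for b :: "real ^ 'n"
  have F_axis: "F (axis i 1) = f i" for i
    by (simp add: F_def axis_eq_axis)
  have Basis: "(Basis :: (real ^ 'n) set) = (\<lambda>i. axis i 1) ` UNIV"
    by (auto simp: Basis_vec_def)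
  have inj: "inj (\<lambda>i::'n. axis i (1::real))"
    by (auto simp: inj_on_def axis_eq_axis)
  have "(\<Prod>i\<in>UNIV. f i (x $ i)) = (\<Prod>b\<in>Basis. F b (x \<bullet> b))" for x :: "real ^ 'n"
    unfolding Basis by (subst prod.reindex[OF inj]) (simp add: F_axis inner_axis)
  then have "(\<integral>x. (\<Prod>i\<in>UNIV. f i (x $ i)) \<partial>lborel) = (\<integral>x. (\<Prod>b\<in>Basis. F b (x \<bullet> b)) \<partial>(lborel::(real ^ 'n) measure))"
    by simp
  also have "\<dots> = (\<Prod>b\<in>Basis. (\<integral>t. F b t \<partial>lborel))"
    by (rule integral_lborel_prod_Basis) (auto simp: Basis F_axis int)
  also have "\<dots> = (\<Prod>i\<in>UNIV. (\<integral>t. f i t \<partial>lborel))"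
    unfolding Basis by (subst prod.reindex[OF inj]) (simp add: F_axis)
  finally show ?thesis .
qed

lemma integral_cube_prod:
  fixes h :: "'n::finite \<Rightarrow> real \<Rightarrow> real"
  assumes cont: "\<And>i. continuous_on {-R..R} (h i)"
  shows "integral (cbox (\<chi> i. -R) (\<chi> i. R)) (\<lambda>y::real ^ 'n. \<Prod>i\<in>UNIV. h i (y $ i))
       = (\<Prod>i\<in>UNIV. integral {-R..R} (h i))"
proof -
  define C :: "(real ^ 'n) set" where "C = cbox (\<chi> i. -R) (\<chi> i. R)"
  have C_iff: "y \<in> C \<longleftrightarrow> (\<forall>i. y $ i \<in> {-R..R})" for y
    by (simp add: C_def mem_box_cart)
  have "continuous_on C (\<lambda>y::real ^ 'n. \<Prod>i\<in>UNIV. h i (y $ i))"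
    by (intro continuous_on_prod continuous_on_compose2[OF cont] continuous_intros) (auto simp: C_iff)
  then have "set_integrable lborel C (\<lambda>y::real ^ 'n. \<Prod>i\<in>UNIV. h i (y $ i))"
    unfolding set_integrable_def C_def by (intro borel_integrable_compact compact_cbox)
  then have "integral C (\<lambda>y. \<Prod>i\<in>UNIV. h i (y $ i)) = (LINT y:C|lborel. (\<Prod>i\<in>UNIV. h i (y $ i)))"
    by (rule set_borel_integral_eq_integral(2)[symmetric])
  also have "\<dots> = (\<integral>y. (\<Prod>i\<in>UNIV. indicator {-R..R} (y $ i) * h i (y $ i)) \<partial>lborel)"
    unfolding set_lebesgue_integral_def
    by (intro Bochner_Integration.integral_cong refl) (auto simp: C_iff indicator_def prod.distrib[symmetric])
  also have "\<dots> = (\<Prod>i\<in>UNIV. (\<integral>t. indicator {-R..R} t * h i t \<partial>lborel))"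
    using borel_integrable_atLeastAtMost'[OF cont]
    by (intro integral_lborel_prod_vec) (simp add: set_integrable_def mult.commute)
  also have "\<dots> = (\<Prod>i\<in>UNIV. integral {-R..R} (h i))"
    using set_borel_integral_eq_integral(2)[OF borel_integrable_atLeastAtMost'[OF cont]]
    by (simp add: set_lebesgue_integral_def)
  finally show ?thesis
    by (simp add: C_def)
qed

lemma continuous_on_bivariate_poly:
  assumes "is_bivariate_poly K"
  shows "continuous_on S (K a)"
proof -
  obtain N c where "\<And>x y. K x y = (\<Sum>i\<le>N. \<Sum>j\<le>N. c i j * x ^ i * y ^ j)"
    using assms unfolding is_bivariate_poly_def by blast
  then have "K a = (\<lambda>y. \<Sum>i\<le>N. \<Sum>j\<le>N. c i j * a ^ i * y ^ j)"
    by (simp add: fun_eq_iff)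
  then show ?thesis
    by (auto intro!: continuous_intros)
qed

lemma kopn_tensor:
  assumes "is_bivariate_poly K" and "\<And>i. continuous_on {-R..R} (f i)"
  shows "kopn R K (\<lambda>y. \<Prod>i\<in>UNIV. f i (y $ i)) x = (\<Prod>i\<in>UNIV. kop1 R K (f i) (x $ i))"
  unfolding kopn_def kop1_def prod.distrib[symmetric]
  by (intro integral_cube_prod continuous_on_mult continuous_on_bivariate_poly assms)

lemma sum_PiE_insert:
  assumes "j \<notin> S"
  shows "(\<Sum>g\<in>PiE (insert j S) G. h g) = (\<Sum>k\<in>G j. \<Sum>g\<in>PiE S G. h (g(j := k)))"
proof -
  have "(\<Sum>g\<in>PiE (insert j S) G. h g) = (\<Sum>(k, g)\<in>G j \<times> PiE S G. h (g(j := k)))"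
    unfolding PiE_insert_eq by (subst sum.reindex[OF inj_combinator[OF assms]]) (simp add: case_prod_unfold)
  also have "\<dots> = (\<Sum>k\<in>G j. \<Sum>g\<in>PiE S G. h (g(j := k)))"
    by (rule sum.cartesian_product[symmetric])
  finally show ?thesis .
qed

lemma sum_PiE_abs_prod_le:
  fixes a :: "'i \<Rightarrow> 'k \<Rightarrow> real"
  assumes "finite S" "\<And>i. i \<in> S \<Longrightarrow> finite (G i)" "\<And>i. i \<in> S \<Longrightarrow> (\<Sum>k\<in>G i. \<bar>a i k\<bar>) \<le> C"
  shows "(\<Sum>g\<in>PiE S G. \<bar>\<Prod>i\<in>S. a i (g i)\<bar>) \<le> C ^ card S"
proof -
  have "(\<Sum>g\<in>PiE S G. \<bar>\<Prod>i\<in>S. a i (g i)\<bar>) = (\<Prod>i\<in>S. \<Sum>k\<in>G i. \<bar>a i k\<bar>)"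
    using assms by (simp add: abs_prod prod_sum_PiE)
  also have "\<dots> \<le> (\<Prod>i\<in>S. C)"
    using assms by (intro prod_mono) (auto intro: sum_nonneg)
  finally show ?thesis
    by simp
qed

lemma sum_PiE_abs_prod_diff_le:
  fixes a b :: "'i \<Rightarrow> 'k \<Rightarrow> real"
  assumes "finite S" "\<And>i. i \<in> S \<Longrightarrow> finite (G i)"
    and "\<And>i. i \<in> S \<Longrightarrow> (\<Sum>k\<in>G i. \<bar>b i k\<bar>) \<le> 1"
    and "\<And>i. i \<in> S \<Longrightarrow> (\<Sum>k\<in>G i. \<bar>a i k - b i k\<bar>) \<le> e"
  shows "(\<Sum>g\<in>PiE S G. \<bar>(\<Prod>i\<in>S. a i (g i)) - (\<Prod>i\<in>S. b i (g i))\<bar>) \<le> (1 + e) ^ card S - 1"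
  using assms
proof (induction S rule: finite_induct)
  case (insert j S)
  define A where "A g = (\<Prod>i\<in>S. a i (g i))" for g
  define B where "B g = (\<Prod>i\<in>S. b i (g i))" for g
  have "0 \<le> (\<Sum>k\<in>G j. \<bar>a j k - b j k\<bar>)"
    by (intro sum_nonneg) simp
  also have "\<dots> \<le> e"
    using insert.prems(3) by simp
  finally have "0 \<le> e" .
  have "(\<Sum>k\<in>G i. \<bar>a i k\<bar>) \<le> 1 + e" if "i \<in> S" for i
  proof -
    have "(\<Sum>k\<in>G i. \<bar>a i k\<bar>) \<le> (\<Sum>k\<in>G i. \<bar>b i k\<bar> + \<bar>a i k - b i k\<bar>)"
      by (intro sum_mono) linarith
    also have "\<dots> \<le> 1 + e"
      using insert.prems that by (simp add: sum.distrib add_mono)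
    finally show ?thesis .
  qed
  then have sum_A: "(\<Sum>g\<in>PiE S G. \<bar>A g\<bar>) \<le> (1 + e) ^ card S"
    unfolding A_def using insert by (intro sum_PiE_abs_prod_le) auto
  have IH: "(\<Sum>g\<in>PiE S G. \<bar>A g - B g\<bar>) \<le> (1 + e) ^ card S - 1"
    unfolding A_def B_def using insert by (intro insert.IH) auto
  have split_j: "(\<Prod>i\<in>insert j S. c i ((g(j := k)) i)) = c j k * (\<Prod>i\<in>S. c i (g i))"
    for c :: "'i \<Rightarrow> 'k \<Rightarrow> real" and g k
    using insert.hyps by (auto intro!: prod.cong)
  have "(\<Sum>g\<in>PiE (insert j S) G. \<bar>(\<Prod>i\<in>insert j S. a i (g i)) - (\<Prod>i\<in>insert j S. b i (g i))\<bar>)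
      = (\<Sum>k\<in>G j. \<Sum>g\<in>PiE S G. \<bar>a j k * A g - b j k * B g\<bar>)"
    by (simp only: sum_PiE_insert[OF insert.hyps(2)] split_j A_def B_def)
  also have "\<dots> \<le> (\<Sum>k\<in>G j. \<Sum>g\<in>PiE S G. \<bar>a j k - b j k\<bar> * \<bar>A g\<bar> + \<bar>b j k\<bar> * \<bar>A g - B g\<bar>)"
  proof (intro sum_mono)
    fix k g
    have "a j k * A g - b j k * B g = (a j k - b j k) * A g + b j k * (A g - B g)"
      by (simp add: algebra_simps)
    then show "\<bar>a j k * A g - b j k * B g\<bar> \<le> \<bar>a j k - b j k\<bar> * \<bar>A g\<bar> + \<bar>b j k\<bar> * \<bar>A g - B g\<bar>"
      by (metis abs_mult abs_triangle_ineq)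
  qed
  also have "\<dots> = (\<Sum>k\<in>G j. \<bar>a j k - b j k\<bar>) * (\<Sum>g\<in>PiE S G. \<bar>A g\<bar>)
                 + (\<Sum>k\<in>G j. \<bar>b j k\<bar>) * (\<Sum>g\<in>PiE S G. \<bar>A g - B g\<bar>)"
    by (simp only: sum.distrib sum_product)
  also have "\<dots> \<le> e * (1 + e) ^ card S + 1 * ((1 + e) ^ card S - 1)"
    using sum_A IH insert.prems \<open>0 \<le> e\<close> by (intro add_mono mult_mono) (auto intro: sum_nonneg)
  also have "\<dots> = (1 + e) ^ card (insert j S) - 1"
    using insert.hyps by (simp add: algebra_simps)
  finally show ?case .
qed simp

lemma cheb_norm1_tensor_diff_le:
  fixes a b :: "'n::finite \<Rightarrow> nat \<Rightarrow> real"
  assumes "\<And>i. (\<Sum>j\<le>M. \<bar>b i j\<bar>) \<le> 1" and "\<And>i. (\<Sum>j\<le>M. \<bar>a i j - b i j\<bar>) \<le> e"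
  shows "cheb_norm1 (\<lambda>x. (\<Prod>i\<in>UNIV. \<Sum>j\<le>M. a i j * cheb_T j (x $ i))
                      - (\<Prod>i\<in>UNIV. \<Sum>j\<le>M. b i j * cheb_T j (x $ i)))
         \<le> (1 + e) ^ CARD('n) - 1"
proof -
  define P where "P = PiE (UNIV :: 'n set) (\<lambda>_. {..M})"
  define D where "D g = (\<Prod>i\<in>UNIV. a i (g i)) - (\<Prod>i\<in>UNIV. b i (g i))" for g
  have inj: "inj_on vec_lambda P"
    by (auto simp: inj_on_def vec_lambda_inject)
  have expand: "(\<Prod>i\<in>UNIV. \<Sum>j\<le>M. c i j * cheb_T j (x $ i))
      = (\<Sum>g\<in>P. (\<Prod>i\<in>UNIV. c i (g i)) * cheb_Tn (vec_lambda g) x)" for c x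
    unfolding P_def by (simp add: prod_sum_PiE cheb_Tn_def prod.distrib)
  have "(\<Prod>i\<in>UNIV. \<Sum>j\<le>M. a i j * cheb_T j (x $ i)) - (\<Prod>i\<in>UNIV. \<Sum>j\<le>M. b i j * cheb_T j (x $ i))
      = (\<Sum>\<beta>\<in>vec_lambda ` P. D (vec_nth \<beta>) * cheb_Tn \<beta> x)" for x
    by (simp add: expand sum.reindex[OF inj] D_def left_diff_distrib sum_subtractf)
  then have "cheb_norm1 (\<lambda>x. (\<Prod>i\<in>UNIV. \<Sum>j\<le>M. a i j * cheb_T j (x $ i))
                      - (\<Prod>i\<in>UNIV. \<Sum>j\<le>M. b i j * cheb_T j (x $ i)))
      = (\<Sum>\<beta>\<in>vec_lambda ` P. \<bar>D (vec_nth \<beta>)\<bar>)"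
    by (intro cheb_norm1_eq) (simp_all add: P_def finite_PiE)
  also have "\<dots> = (\<Sum>g\<in>P. \<bar>D g\<bar>)"
    by (simp add: sum.reindex[OF inj] vec_lambda_inverse)
  also have "\<dots> \<le> (1 + e) ^ CARD('n) - 1"
    unfolding P_def D_def using assms by (intro sum_PiE_abs_prod_diff_le) auto
  finally show ?thesis .
qed

lemma geometric_sum_le_exp:
  fixes e :: real
  assumes "0 \<le> e" and "real n * e \<le> 1"
  shows "e * (\<Sum>i<n. (1 + e) ^ i) \<le> exp 1 * e * real n"
proof -
  have "(1 + e) ^ i \<le> exp 1" if "i < n" for i
  proof -
    have "(1 + e) ^ i \<le> exp e ^ i"
      using assms(1) by (intro power_mono) (auto simp: exp_ge_add_one_self)
    also have "\<dots> = exp (real i * e)"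
      by (simp add: exp_of_nat_mult)
    also have "\<dots> \<le> exp 1"
      using assms mult_right_mono[of "real i" "real n" e] that by simp
    finally show ?thesis .
  qed
  then have "(\<Sum>i<n. (1 + e) ^ i) \<le> real n * exp 1"
    using sum_mono[of "{..<n}" "\<lambda>i. (1 + e) ^ i" "\<lambda>_. exp 1"] by simp
  then have "e * (\<Sum>i<n. (1 + e) ^ i) \<le> e * (real n * exp 1)"
    using assms(1) by (rule mult_left_mono)
  then show ?thesis
    by (simp add: mult_ac)
qed

theorem lemma15:
  fixes d :: nat and R \<epsilon> :: real and K :: "real \<Rightarrow> real \<Rightarrow> real" and \<alpha> :: "nat ^ 'n"
  assumes "R > 1" and "\<epsilon> \<ge> 0"
    and "is_bivariate_poly K"
    and "\<And>k. k \<le> d \<Longrightarrow> cheb_norm1_1 (\<lambda>x. kop1 R K (cheb_T k) x - cheb_T k x) \<le> \<epsilon>"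
    and "\<And>i. \<alpha> $ i \<le> d"
  shows "cheb_norm1 (\<lambda>x. kopn R K (cheb_Tn \<alpha>) x - cheb_Tn \<alpha> x)
           \<le> \<epsilon> * (\<Sum>i<CARD('n). (1 + \<epsilon>) ^ i)
       \<and> (\<epsilon> \<le> 1 / real CARD('n) \<longrightarrow>
           cheb_norm1 (\<lambda>x. kopn R K (cheb_Tn \<alpha>) x - cheb_Tn \<alpha> x)
             \<le> exp 1 * \<epsilon> * real CARD('n))"
proof -
  obtain M C where "d \<le> M"
    and kop1_T: "\<And>k x. k \<le> d \<Longrightarrow> kop1 R K (cheb_T k) x = (\<Sum>j\<le>M. C k j * cheb_T j x)"
    and err: "\<And>k. k \<le> d \<Longrightarrow> (\<Sum>j\<le>M. \<bar>C k j - of_bool (j = k)\<bar>) \<le> \<epsilon>"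
    using kop1_cheb_T_expansion[OF assms(3,4)] by blast
  have \<alpha>_le_M: "\<alpha> $ i \<le> M" for i
    using assms(5) \<open>d \<le> M\<close> by (rule le_trans)
  then have tensor_form: "(\<lambda>x. kopn R K (cheb_Tn \<alpha>) x - cheb_Tn \<alpha> x)
      = (\<lambda>x. (\<Prod>i\<in>UNIV. \<Sum>j\<le>M. C (\<alpha> $ i) j * cheb_T j (x $ i))
           - (\<Prod>i\<in>UNIV. \<Sum>j\<le>M. of_bool (j = \<alpha> $ i) * cheb_T j (x $ i)))"
    unfolding cheb_Tn_def[abs_def]
    by (simp add: kopn_tensor[OF assms(3) continuous_on_cheb_T] kop1_T[OF assms(5)])
  have "cheb_norm1 (\<lambda>x. kopn R K (cheb_Tn \<alpha>) x - cheb_Tn \<alpha> x) \<le> (1 + \<epsilon>) ^ CARD('n) - 1"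
    unfolding tensor_form using err[OF assms(5)] \<alpha>_le_M
    by (intro cheb_norm1_tensor_diff_le) (simp_all add: Int_insert_right)
  also have "\<dots> = \<epsilon> * (\<Sum>i<CARD('n). (1 + \<epsilon>) ^ i)"
    by (simp add: power_diff_1_eq)
  finally have bound: "cheb_norm1 (\<lambda>x. kopn R K (cheb_Tn \<alpha>) x - cheb_Tn \<alpha> x)
      \<le> \<epsilon> * (\<Sum>i<CARD('n). (1 + \<epsilon>) ^ i)" .
  have "\<epsilon> * (\<Sum>i<CARD('n). (1 + \<epsilon>) ^ i) \<le> exp 1 * \<epsilon> * real CARD('n)"
    if "\<epsilon> \<le> 1 / real CARD('n)"
    using that assms(2) by (intro geometric_sum_le_exp) (simp_all add: field_simps)
  with bound show ?thesis
    by auto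
qed

end
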